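(* Let $N\ge1$, $K\ge1$, $T\ge1$, $L>0$, $\sigma_l^2\ge0$, $\sigma_g^2>0$, $C>0$, $\Delta_0=f(W_0)-f^*\ge0$, and truncation errors $\hat r_1,\dots,\hat r_N\ge0$ be fixed, let $D_0=4\big(1+\frac{1}{K^2T}\big)$, and for $p=(p_1,\dots,p_N)\in\mathbb{R}^N$ define $$\Phi(p)=\frac{1}{C}\Bigg[\frac{L\Delta_0}{\sqrt{T}}+\frac{L(L+1)}{2}\Bigg(\frac{3ND_0^K}{\sqrt T}\sum_{i=1}^N p_i^2\hat r_i^2+\frac{24N\sigma_l^2(D_0^K-1)}{L^2K^2T^{3/2}(D_0-1)}\sum_{i=1}^N p_i^2+\frac{6N\sigma_l^2}{L^2\sqrt T}\sum_{i=1}^N p_i^2\Bigg)+\frac{3N(\sigma_l^2+6K\sigma_g^2)}{2KT}\sum_{i=1}^N p_i^2+\frac{N\sigma_l^2}{2\sqrt T}\sum_{i=1}^N p_i^2\Bigg].$$ Then there is a constant $\epsilon>0$, depending only on $N,K,T,L,\sigma_l^2,\sigma_g^2$ (and not on $p$ or the $\hat r_i$), such that the minimizer of $\Phi$ over $\{p\in\mathbb{R}^N:\sum_{i=1}^N p_i=1\}$ is $$p_i^*=\frac{1/(\hat r_i^2+\epsilon)}{\sum_{j=1}^N 1/(\hat r_j^2+\epsilon)},\qquad i=1,\dots,N.$$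
   Context: $\Phi(p)$ is the right-hand side of the FedHL convergence bound $\frac1T\sum_{t=0}^{T-1}\mathbb{E}\|\nabla f(W_t)\|^2\le\Phi(p)$ for heterogeneous-LoRA federated learning with $N$ clients, aggregation weights $p_i$, $K$ local SGD steps, $T$ rounds, learning rate $\eta_t=\frac{1}{LK\sqrt T}$ (so $D_0=4(1+L^2\eta_t^2)$), smoothness constant $L$, local gradient variance bound $\sigma_l^2$, gradient heterogeneity bound $\sigma_g^2$, and $\hat r_i$ bounding the rank-$r_i$ SVD truncation error of client $i$ via $\mathbb{E}\|W_t-[W_t]_{r_i}\|_F^2\le\hat r_i^2$. In the minimization, $C$, $\Delta_0$ and the $\hat r_i$ are held fixed. *)

theory Defs
  imports Complex_Main
begin

definition fedhl_D0 :: "nat \<Rightarrow> nat \<Rightarrow> real" where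
  "fedhl_D0 K T = 4 * (1 + 1 / (real K ^ 2 * real T))"

text \<open>FedHL convergence bound Phi(p); clients indexed by 1..N; sl2 = sigma_l^2, sg2 = sigma_g^2,
  rhat i = hat r_i.\<close>
definition fedhl_Phi ::
  "nat \<Rightarrow> nat \<Rightarrow> nat \<Rightarrow> real \<Rightarrow> real \<Rightarrow> real \<Rightarrow> real \<Rightarrow> real \<Rightarrow> (nat \<Rightarrow> real) \<Rightarrow> (nat \<Rightarrow> real) \<Rightarrow> real" where
  "fedhl_Phi N K T L sl2 sg2 C Delta0 rhat p =
    (let D0 = fedhl_D0 K T; n = real N; k = real K; t = real T;
         S2 = (\<Sum>i=1..N. (p i)^2);
         SR = (\<Sum>i=1..N. (p i)^2 * (rhat i)^2)
     in (1 / C) *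
       ( L * Delta0 / sqrt t
       + L * (L + 1) / 2 *
           ( 3 * n * D0 ^ K / sqrt t * SR
           + 24 * n * sl2 * (D0 ^ K - 1) / (L^2 * k^2 * t powr (3/2) * (D0 - 1)) * S2
           + 6 * n * sl2 / (L^2 * sqrt t) * S2)
       + 3 * n * (sl2 + 6 * k * sg2) / (2 * k * t) * S2
       + n * sl2 / (2 * sqrt t) * S2))"

end

theory Submission
  imports Defs
begin

text \<open>Both summands of \<open>fedhl_Phi\<close> that depend on \<open>p\<close> are positive multiples of
  \<open>\<Sum> p\<^sub>i\<^sup>2 r\<^sub>i\<^sup>2\<close> and \<open>\<Sum> p\<^sub>i\<^sup>2\<close>, so \<open>\<Phi>\<close> is an increasing affine function of the weighted
  sum of squares \<open>\<Sum> (r\<^sub>i\<^sup>2 + \<epsilon>) p\<^sub>i\<^sup>2\<close>, where \<open>\<epsilon>\<close> is the ratio of the two coefficients.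
  On the hyperplane \<open>\<Sum> p\<^sub>i = 1\<close> a weighted sum of squares \<open>\<Sum> w\<^sub>i p\<^sub>i\<^sup>2\<close> with \<open>w > 0\<close> splits
  as its value at \<open>q\<^sub>i \<propto> 1/w\<^sub>i\<close> plus \<open>\<Sum> w\<^sub>i (p\<^sub>i - q\<^sub>i)\<^sup>2\<close>, because the cross term
  \<open>2 \<Sum> w\<^sub>i q\<^sub>i (p\<^sub>i - q\<^sub>i)\<close> is a constant times \<open>\<Sum> (p\<^sub>i - q\<^sub>i) = 0\<close>; hence \<open>q\<close> is the unique
  minimiser.\<close>

definition normalized_inverse :: "('a \<Rightarrow> real) \<Rightarrow> 'a set \<Rightarrow> 'a \<Rightarrow> real" where
  "normalized_inverse w A i = (1 / w i) / (\<Sum>j\<in>A. 1 / w j)"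

lemma sum_normalized_inverse:
  assumes "finite A" "A \<noteq> {}" "\<forall>i\<in>A. w i > 0"
  shows "(\<Sum>i\<in>A. normalized_inverse w A i) = 1"
proof -
  have "(\<Sum>j\<in>A. 1 / w j) > 0"
    using assms by (intro sum_pos) auto
  then show ?thesis
    unfolding normalized_inverse_def sum_divide_distrib[symmetric] by simp
qed

lemma weighted_sum_squares_decomp:
  fixes w p :: "'a \<Rightarrow> real"
  assumes "finite A" "A \<noteq> {}" "\<forall>i\<in>A. w i > 0" and p: "sum p A = 1"
  defines "q \<equiv> normalized_inverse w A"
  shows "(\<Sum>i\<in>A. w i * (p i)\<^sup>2) = (\<Sum>i\<in>A. w i * (q i)\<^sup>2) + (\<Sum>i\<in>A. w i * (p i - q i)\<^sup>2)"
proof -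
  define S where "S = (\<Sum>j\<in>A. 1 / w j)"
  have q: "sum q A = 1"
    unfolding q_def using assms(1-3) by (rule sum_normalized_inverse)
  have wq: "w i * q i = 1 / S" if "i \<in> A" for i
    using assms(3) that by (simp add: q_def S_def normalized_inverse_def less_imp_neq[symmetric])
  have "(\<Sum>i\<in>A. w i * (p i)\<^sup>2)
      = (\<Sum>i\<in>A. w i * (q i)\<^sup>2 + w i * (p i - q i)\<^sup>2 + 2 * (w i * q i) * (p i - q i))"
    by (intro sum.cong) (simp_all add: power2_eq_square algebra_simps)
  also have "\<dots> = (\<Sum>i\<in>A. w i * (q i)\<^sup>2 + w i * (p i - q i)\<^sup>2 + 2 / S * (p i - q i))"
    using wq by (intro sum.cong) auto
  also have "\<dots> = (\<Sum>i\<in>A. w i * (q i)\<^sup>2) + (\<Sum>i\<in>A. w i * (p i - q i)\<^sup>2)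
                  + 2 / S * (sum p A - sum q A)"
    by (simp only: sum.distrib sum_distrib_left[symmetric] sum_subtractf)
  finally show ?thesis
    using p q by simp
qed

lemma weighted_sum_squares_min:
  fixes w p :: "'a \<Rightarrow> real"
  assumes "finite A" "A \<noteq> {}" "\<forall>i\<in>A. w i > 0" "sum p A = 1"
  shows "(\<Sum>i\<in>A. w i * (normalized_inverse w A i)\<^sup>2) \<le> (\<Sum>i\<in>A. w i * (p i)\<^sup>2)"
proof -
  have "(\<Sum>i\<in>A. w i * (p i - normalized_inverse w A i)\<^sup>2) \<ge> 0"
    using assms(3) by (intro sum_nonneg) (simp add: less_imp_le)
  then show ?thesis
    using weighted_sum_squares_decomp[OF assms] by linarith
qed

lemma weighted_sum_squares_min_unique:
  fixes w p :: "'a \<Rightarrow> real"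
  assumes "finite A" "A \<noteq> {}" and w: "\<forall>i\<in>A. w i > 0" and "sum p A = 1"
    and le: "(\<Sum>i\<in>A. w i * (p i)\<^sup>2) \<le> (\<Sum>i\<in>A. w i * (normalized_inverse w A i)\<^sup>2)"
  shows "\<forall>i\<in>A. p i = normalized_inverse w A i"
proof -
  let ?q = "normalized_inverse w A"
  have nonneg: "\<forall>i\<in>A. 0 \<le> w i * (p i - ?q i)\<^sup>2"
    using w by (simp add: less_imp_le)
  moreover have "(\<Sum>i\<in>A. w i * (p i - ?q i)\<^sup>2) \<ge> 0"
    using nonneg by (simp add: sum_nonneg)
  ultimately have "(\<Sum>i\<in>A. w i * (p i - ?q i)\<^sup>2) = 0"
    using weighted_sum_squares_decomp[OF assms(1-4)] le by linarith
  then have "\<forall>i\<in>A. w i * (p i - ?q i)\<^sup>2 = 0"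
    using nonneg by (simp add: sum_nonneg_eq_0_iff[OF assms(1)])
  then show ?thesis
    using w by (simp add: less_imp_neq[symmetric])
qed

definition fedhl_coeff_trunc :: "nat \<Rightarrow> nat \<Rightarrow> nat \<Rightarrow> real \<Rightarrow> real" where
  "fedhl_coeff_trunc N K T L = L * (L + 1) / 2 * (3 * real N * fedhl_D0 K T ^ K / sqrt (real T))"

definition fedhl_coeff_var :: "nat \<Rightarrow> nat \<Rightarrow> nat \<Rightarrow> real \<Rightarrow> real \<Rightarrow> real \<Rightarrow> real" where
  "fedhl_coeff_var N K T L sl2 sg2 =
     (let D0 = fedhl_D0 K T; n = real N; k = real K; t = real T
      in L * (L + 1) / 2 *
           ( 24 * n * sl2 * (D0 ^ K - 1) / (L\<^sup>2 * k\<^sup>2 * t powr (3/2) * (D0 - 1))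
           + 6 * n * sl2 / (L\<^sup>2 * sqrt t))
         + 3 * n * (sl2 + 6 * k * sg2) / (2 * k * t)
         + n * sl2 / (2 * sqrt t))"

lemma fedhl_D0_gt_one: "fedhl_D0 K T > 1"
  unfolding fedhl_D0_def by (simp add: add_pos_nonneg)

lemma fedhl_coeff_trunc_pos:
  assumes "N \<ge> 1" "T \<ge> 1" "L > 0"
  shows "fedhl_coeff_trunc N K T L > 0"
  using assms fedhl_D0_gt_one[of K T]
  by (simp add: fedhl_coeff_trunc_def zero_less_mult_iff)

lemma fedhl_coeff_var_pos:
  assumes "N \<ge> 1" "K \<ge> 1" "T \<ge> 1" "L > 0" "sl2 \<ge> 0" "sg2 > 0"
  shows "fedhl_coeff_var N K T L sl2 sg2 > 0"
proof -
  let ?D0 = "fedhl_D0 K T" and ?n = "real N" and ?k = "real K" and ?t = "real T"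
  have "?D0 ^ K \<ge> 1"
    using fedhl_D0_gt_one[of K T] by (simp add: one_le_power less_imp_le)
  then have "24 * ?n * sl2 * (?D0 ^ K - 1) / (L\<^sup>2 * ?k\<^sup>2 * ?t powr (3/2) * (?D0 - 1)) \<ge> 0"
    using assms fedhl_D0_gt_one[of K T] by simp
  moreover have "6 * ?n * sl2 / (L\<^sup>2 * sqrt ?t) \<ge> 0"
    using assms by simp
  ultimately have "L * (L + 1) / 2 *
      (24 * ?n * sl2 * (?D0 ^ K - 1) / (L\<^sup>2 * ?k\<^sup>2 * ?t powr (3/2) * (?D0 - 1))
       + 6 * ?n * sl2 / (L\<^sup>2 * sqrt ?t)) \<ge> 0"
    using assms(4) by simp
  moreover have "3 * ?n * (sl2 + 6 * ?k * sg2) / (2 * ?k * ?t) > 0"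
    using assms by (simp add: zero_less_mult_iff add_nonneg_pos)
  moreover have "?n * sl2 / (2 * sqrt ?t) \<ge> 0"
    using assms by simp
  ultimately show ?thesis
    unfolding fedhl_coeff_var_def Let_def by linarith
qed

lemma fedhl_Phi_eq:
  "fedhl_Phi N K T L sl2 sg2 C Delta0 rhat p =
    (1 / C) * (L * Delta0 / sqrt (real T)
               + fedhl_coeff_trunc N K T L * (\<Sum>i=1..N. (p i)\<^sup>2 * (rhat i)\<^sup>2)
               + fedhl_coeff_var N K T L sl2 sg2 * (\<Sum>i=1..N. (p i)\<^sup>2))"
  unfolding fedhl_Phi_def fedhl_coeff_trunc_def fedhl_coeff_var_def Let_def
  by (simp only: ring_distribs mult.assoc add.assoc)

definition fedhl_eps :: "nat \<Rightarrow> nat \<Rightarrow> nat \<Rightarrow> real \<Rightarrow> real \<Rightarrow> real \<Rightarrow> real" where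
  "fedhl_eps N K T L sl2 sg2 = fedhl_coeff_var N K T L sl2 sg2 / fedhl_coeff_trunc N K T L"

lemma fedhl_eps_pos:
  assumes "N \<ge> 1" "K \<ge> 1" "T \<ge> 1" "L > 0" "sl2 \<ge> 0" "sg2 > 0"
  shows "fedhl_eps N K T L sl2 sg2 > 0"
  using fedhl_coeff_var_pos[OF assms] fedhl_coeff_trunc_pos[of N T L] assms
  by (simp add: fedhl_eps_def)

lemma fedhl_Phi_eq_weighted_sum_squares:
  assumes "fedhl_coeff_trunc N K T L \<noteq> 0"
  shows "fedhl_Phi N K T L sl2 sg2 C Delta0 rhat p =
    (1 / C) * (L * Delta0 / sqrt (real T) + fedhl_coeff_trunc N K T L *
       (\<Sum>i=1..N. ((rhat i)\<^sup>2 + fedhl_eps N K T L sl2 sg2) * (p i)\<^sup>2))"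
proof -
  let ?a = "fedhl_coeff_trunc N K T L" and ?b = "fedhl_coeff_var N K T L sl2 sg2"
  have "?a * (\<Sum>i=1..N. ((rhat i)\<^sup>2 + fedhl_eps N K T L sl2 sg2) * (p i)\<^sup>2)
      = ?a * (\<Sum>i=1..N. (p i)\<^sup>2 * (rhat i)\<^sup>2) + ?b * (\<Sum>i=1..N. (p i)\<^sup>2)"
    using assms by (simp add: fedhl_eps_def sum_distrib_left sum.distrib algebra_simps)
  then show ?thesis
    by (simp only: fedhl_Phi_eq add.assoc)
qed

lemma fedhl_Phi_le_iff:
  assumes "N \<ge> 1" "T \<ge> 1" "L > 0" "C > 0"
  shows "fedhl_Phi N K T L sl2 sg2 C Delta0 rhat p \<le> fedhl_Phi N K T L sl2 sg2 C Delta0 rhat p'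
    \<longleftrightarrow> (\<Sum>i=1..N. ((rhat i)\<^sup>2 + fedhl_eps N K T L sl2 sg2) * (p i)\<^sup>2)
        \<le> (\<Sum>i=1..N. ((rhat i)\<^sup>2 + fedhl_eps N K T L sl2 sg2) * (p' i)\<^sup>2)"
  using fedhl_coeff_trunc_pos[of N T L K] assms
  by (simp add: fedhl_Phi_eq_weighted_sum_squares divide_le_cancel)

theorem theorem3:
  fixes N K T :: nat and L sl2 sg2 :: real
  assumes "N \<ge> 1" and "K \<ge> 1" and "T \<ge> 1" and "L > 0" and "sl2 \<ge> 0" and "sg2 > 0"
  shows "\<exists>eps > 0. \<forall>(C::real) (Delta0::real) (rhat::nat \<Rightarrow> real).
           C > 0 \<longrightarrow> Delta0 \<ge> 0 \<longrightarrow> (\<forall>i\<in>{1..N}. rhat i \<ge> 0) \<longrightarrow>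
           (let pstar = (\<lambda>i. (1 / ((rhat i)^2 + eps)) / (\<Sum>j=1..N. 1 / ((rhat j)^2 + eps)))
            in (\<Sum>i=1..N. pstar i) = 1 \<and>
               (\<forall>p::nat \<Rightarrow> real. (\<Sum>i=1..N. p i) = 1 \<longrightarrow>
                  fedhl_Phi N K T L sl2 sg2 C Delta0 rhat pstar \<le> fedhl_Phi N K T L sl2 sg2 C Delta0 rhat p) \<and>
               (\<forall>p::nat \<Rightarrow> real. (\<Sum>i=1..N. p i) = 1 \<longrightarrow>
                  fedhl_Phi N K T L sl2 sg2 C Delta0 rhat p \<le> fedhl_Phi N K T L sl2 sg2 C Delta0 rhat pstar \<longrightarrow>
                  (\<forall>i\<in>{1..N}. p i = pstar i)))"
proof (intro exI[of _ "fedhl_eps N K T L sl2 sg2"] conjI allI impI)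
  show "fedhl_eps N K T L sl2 sg2 > 0"
    using assms by (rule fedhl_eps_pos)
next
  fix C Delta0 :: real and rhat :: "nat \<Rightarrow> real"
  assume "C > 0"
  define w where "w i = (rhat i)\<^sup>2 + fedhl_eps N K T L sl2 sg2" for i
  have w: "\<forall>i\<in>{1..N}. w i > 0"
    using fedhl_eps_pos[OF assms] by (simp add: w_def add_nonneg_pos)
  have N: "finite {1..N}" "{1..N} \<noteq> {}"
    using assms(1) by simp_all
  have pstar: "(\<lambda>i. (1 / ((rhat i)^2 + fedhl_eps N K T L sl2 sg2))
                 / (\<Sum>j=1..N. 1 / ((rhat j)^2 + fedhl_eps N K T L sl2 sg2)))
             = normalized_inverse w {1..N}"
    by (simp add: normalized_inverse_def w_def fun_eq_iff)
  show "let pstar = (\<lambda>i. (1 / ((rhat i)^2 + fedhl_eps N K T L sl2 sg2))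
                         / (\<Sum>j=1..N. 1 / ((rhat j)^2 + fedhl_eps N K T L sl2 sg2)))
        in (\<Sum>i=1..N. pstar i) = 1 \<and>
           (\<forall>p. (\<Sum>i=1..N. p i) = 1 \<longrightarrow>
              fedhl_Phi N K T L sl2 sg2 C Delta0 rhat pstar \<le> fedhl_Phi N K T L sl2 sg2 C Delta0 rhat p) \<and>
           (\<forall>p. (\<Sum>i=1..N. p i) = 1 \<longrightarrow>
              fedhl_Phi N K T L sl2 sg2 C Delta0 rhat p \<le> fedhl_Phi N K T L sl2 sg2 C Delta0 rhat pstar \<longrightarrow>
              (\<forall>i\<in>{1..N}. p i = pstar i))"
    unfolding Let_def pstar fedhl_Phi_le_iff[OF assms(1,3,4) \<open>C > 0\<close>]
    unfolding w_def[symmetric]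
    using sum_normalized_inverse[OF N w] weighted_sum_squares_min[OF N w]
      weighted_sum_squares_min_unique[OF N w] by blast
qed

end
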